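(* Let $(G,\alpha)$ be a finite Hom-group, $\mathbb{K}$ a field, and $\mathbb{K}G$ the Hom-group Hopf algebra. If $A$ is a Hom-sub-Hopf algebra of $\mathbb{K}G$, then $\dim_{\mathbb{K}}(A)$ divides $|G|$.
   Context: A Hom-group is a tuple $(G,\mu,1,\alpha)$ where $G$ is a set, $\mu:G\times G\to G$ is a binary operation written $\mu(g,h)=gh$, $1\in G$ is a distinguished element, and $\alpha:G\to G$ is a bijection, such that: (1) Hom-associativity: $\alpha(g)(hk)=(gh)\alpha(k)$ for all $g,h,k\in G$; (2) $\alpha(gk)=\alpha(g)\alpha(k)$ for all $g,k$; (3) Hom-unitality: $g1=1g=\alpha(g)$ for all $g$, and $\alpha(1)=1$; (4) for every $g\in G$ there exists $g^{-1}\in G$ with $gg^{-1}=g^{-1}g=1$ (such an inverse is unique). The Hom-group Hopf algebra $\mathbb{K}G$ is the $\mathbb{K}$-vector space with basis $G$, with multiplication the bilinear extension of that of $G$, unit $1$, twisting map the linear extension of $\alpha$, comultiplication $\Delta(g)=g\otimes g$, counit $\varepsilon(g)=1$, antipode $S(g)=g^{-1}$ (extended linearly), and coalgebra twisting map $\mathrm{Id}$. A Hom-sub-Hopf algebra of $\mathbb{K}G$ is a subspace $A$ containing $1$ with $AA\subseteq A$, $\alpha(A)= A$, $\Delta(A)\subseteq A\otimes A$, and $S(A)\subseteq A$, so that $A$ with the restricted structure maps is itself a Hom-Hopf algebra. *)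

theory Defs
  imports Main "HOL.Vector_Spaces" "HOL-Library.Function_Algebras"
begin

definition hom_group :: "'g set \<Rightarrow> ('g \<Rightarrow> 'g \<Rightarrow> 'g) \<Rightarrow> 'g \<Rightarrow> ('g \<Rightarrow> 'g) \<Rightarrow> bool" where
  "hom_group G mu e alpha \<longleftrightarrow>
     (\<forall>g\<in>G. \<forall>h\<in>G. mu g h \<in> G) \<and> e \<in> G \<and> bij_betw alpha G G \<and>
     (\<forall>g\<in>G. \<forall>h\<in>G. \<forall>k\<in>G. mu (alpha g) (mu h k) = mu (mu g h) (alpha k)) \<and>
     (\<forall>g\<in>G. \<forall>k\<in>G. alpha (mu g k) = mu (alpha g) (alpha k)) \<and>
     (\<forall>g\<in>G. mu g e = alpha g \<and> mu e g = alpha g) \<and> alpha e = e \<and>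
     (\<forall>g\<in>G. \<exists>h\<in>G. mu g h = e \<and> mu h g = e)"

definition hg_inv :: "'g set \<Rightarrow> ('g \<Rightarrow> 'g \<Rightarrow> 'g) \<Rightarrow> 'g \<Rightarrow> 'g \<Rightarrow> 'g" where
  "hg_inv G mu e g = (SOME h. h \<in> G \<and> mu g h = e \<and> mu h g = e)"

text \<open>The group algebra KG, elements represented by their coefficient functions
 G \<rightarrow> K (zero outside G).  An element f corresponds to the sum of f g * g over g in G.\<close>
definition KG :: "'g set \<Rightarrow> ('g \<Rightarrow> 'k::field) set" where
  "KG G = {f. \<forall>x. x \<notin> G \<longrightarrow> f x = 0}"

definition kg_scale :: "'k::field \<Rightarrow> ('g \<Rightarrow> 'k) \<Rightarrow> ('g \<Rightarrow> 'k)" where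
  "kg_scale c f = (\<lambda>x. c * f x)"

definition kg_basis :: "'g \<Rightarrow> ('g \<Rightarrow> 'k::field)" where
  "kg_basis g = (\<lambda>x. if x = g then 1 else 0)"

definition kg_mult :: "'g set \<Rightarrow> ('g \<Rightarrow> 'g \<Rightarrow> 'g) \<Rightarrow> ('g \<Rightarrow> 'k::field) \<Rightarrow> ('g \<Rightarrow> 'k) \<Rightarrow> ('g \<Rightarrow> 'k)" where
  "kg_mult G mu f h = (\<lambda>x. \<Sum>p\<in>{p\<in>G \<times> G. mu (fst p) (snd p) = x}. f (fst p) * h (snd p))"

definition kg_alpha :: "'g set \<Rightarrow> ('g \<Rightarrow> 'g) \<Rightarrow> ('g \<Rightarrow> 'k::field) \<Rightarrow> ('g \<Rightarrow> 'k)" where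
  "kg_alpha G alpha f = (\<lambda>x. \<Sum>g\<in>{g\<in>G. alpha g = x}. f g)"

definition kg_S :: "'g set \<Rightarrow> ('g \<Rightarrow> 'g \<Rightarrow> 'g) \<Rightarrow> 'g \<Rightarrow> ('g \<Rightarrow> 'k::field) \<Rightarrow> ('g \<Rightarrow> 'k)" where
  "kg_S G mu e f = (\<lambda>x. \<Sum>g\<in>{g\<in>G. hg_inv G mu e g = x}. f g)"

text \<open>Comultiplication Delta(g) = g \<otimes> g, with KG \<otimes> KG represented as
 coefficient functions on G \<times> G (basis g \<otimes> h).\<close>
definition kg_Delta :: "('g \<Rightarrow> 'k::field) \<Rightarrow> ('g \<times> 'g \<Rightarrow> 'k)" where
  "kg_Delta f = (\<lambda>(x, y). if x = y then f x else 0)"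

text \<open>A \<otimes> A as a subspace of KG \<otimes> KG: the span of the simple tensors a \<otimes> b.\<close>
definition tensor_sq :: "('g \<Rightarrow> 'k::field) set \<Rightarrow> ('g \<times> 'g \<Rightarrow> 'k) set" where
  "tensor_sq A = {F. \<exists>(n::nat) c a b. (\<forall>i<n. a i \<in> A \<and> b i \<in> A) \<and>
      F = (\<lambda>(x, y). \<Sum>i<n. c i * a i x * b i y)}"

definition hom_sub_hopf :: "'g set \<Rightarrow> ('g \<Rightarrow> 'g \<Rightarrow> 'g) \<Rightarrow> 'g \<Rightarrow> ('g \<Rightarrow> 'g)
     \<Rightarrow> ('g \<Rightarrow> 'k::field) set \<Rightarrow> bool" where
  "hom_sub_hopf G mu e alpha A \<longleftrightarrow>
     A \<subseteq> KG G \<and> module.subspace kg_scale A \<and>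
     kg_basis e \<in> A \<and>
     (\<forall>f\<in>A. \<forall>h\<in>A. kg_mult G mu f h \<in> A) \<and>
     kg_alpha G alpha ` A = A \<and>
     (\<forall>f\<in>A. kg_Delta f \<in> tensor_sq A) \<and>
     (\<forall>f\<in>A. kg_S G mu e f \<in> A)"

definition kg_dim :: "('g \<Rightarrow> 'k::field) set \<Rightarrow> nat" where
  "kg_dim A = vector_space.dim kg_scale A"

end

(*
  Because \<Delta>(g) = g \<otimes> g, the coalgebra condition \<Delta>(A) \<subseteq> A \<otimes> A forces every basis element g
  in the support of an element of A to lie in A itself; hence A is spanned by the set H
  of group elements lying in A, and dim A = |H|.  Untwisting the product by \<alpha>, g * h := \<alpha>\<inverse>(gh),
  turns G into an ordinary group, and closure of A under multiplication, \<alpha>\<inverse> and the antipode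
  makes H a subgroup of it, so Lagrange's theorem gives |H| dvd |G|.
*)

theory Submission
  imports Defs "HOL-Algebra.Coset"
begin

lemma sum_fun_apply: "sum f S x = (\<Sum>i\<in>S. f i x)"
  by (induction S rule: infinite_finite_induct) auto

interpretation kg: vector_space "kg_scale :: 'k::field \<Rightarrow> ('g \<Rightarrow> 'k) \<Rightarrow> _"
  by unfold_locales (auto simp: kg_scale_def algebra_simps)

lemma inj_kg_basis: "inj (kg_basis :: 'g \<Rightarrow> 'g \<Rightarrow> 'k::field)"
  by (rule injI) (metis kg_basis_def zero_neq_one)

lemma kg_basis_mem_KG_iff [simp]: "(kg_basis g :: 'g \<Rightarrow> 'k::field) \<in> KG G \<longleftrightarrow> g \<in> G"
  by (auto simp: KG_def kg_basis_def)

lemma independent_range_kg_basis: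
  "kg.independent (range (kg_basis :: 'g \<Rightarrow> 'g \<Rightarrow> 'k::field))"
  unfolding kg.independent_explicit_finite_subsets
proof (intro allI impI ballI)
  fix S u v
  assume S: "S \<subseteq> range (kg_basis :: 'g \<Rightarrow> 'g \<Rightarrow> 'k)" "finite S"
    and zero: "(\<Sum>v\<in>S. kg_scale (u v) v) = 0" and v: "v \<in> S"
  obtain g where g: "v = kg_basis g" using v S by blast
  have "(\<Sum>w\<in>S. kg_scale (u w) w) g = (\<Sum>w\<in>S. if w = v then u v else 0)"
    unfolding sum_fun_apply kg_scale_def
  proof (rule sum.cong)
    fix w assume "w \<in> S"
    then obtain h where h: "w = kg_basis h" using S by blast
    then have "w = v \<longleftrightarrow> h = g" using g by (simp add: inj_eq[OF inj_kg_basis])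
    then show "u w * w g = (if w = v then u v else 0)"
      using h by (auto simp: kg_basis_def)
  qed simp
  also have "\<dots> = u v" using v S by simp
  finally show "u v = 0" using zero by simp
qed

lemma kg_dim_span_kg_basis:
  assumes "finite H"
  shows "kg_dim (kg.span (kg_basis ` H :: ('g \<Rightarrow> 'k::field) set)) = card H"
proof -
  have "kg.independent (kg_basis ` H :: ('g \<Rightarrow> 'k) set)"
    by (rule kg.independent_mono[OF independent_range_kg_basis]) blast
  then have "kg.dim (kg.span (kg_basis ` H :: ('g \<Rightarrow> 'k) set)) = card (kg_basis ` H :: ('g \<Rightarrow> 'k) set)"
    by (rule kg.dim_span_eq_card_independent)
  then show ?thesis
    unfolding kg_dim_def by (simp add: card_image inj_on_subset[OF inj_kg_basis])
qed

lemma kg_eq_sum_kg_basis: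
  assumes "finite G" "f \<in> KG G"
  shows "f = (\<Sum>g\<in>{g\<in>G. f g \<noteq> 0}. kg_scale (f g) (kg_basis g))"
proof
  fix x
  have "(\<Sum>g\<in>{g\<in>G. f g \<noteq> 0}. kg_scale (f g) (kg_basis g)) x
      = (\<Sum>g\<in>{g\<in>G. f g \<noteq> 0}. if g = x then f x else 0)"
    by (simp add: sum_fun_apply kg_scale_def kg_basis_def) (rule sum.cong, auto)
  also have "\<dots> = f x" using assms by (auto simp: KG_def)
  finally show "f x = (\<Sum>g\<in>{g\<in>G. f g \<noteq> 0}. kg_scale (f g) (kg_basis g)) x" by simp
qed

lemma subspace_eq_span_kg_basis:
  assumes "finite G" "A \<subseteq> KG G" "kg.subspace A"
    and support: "\<And>f z. f \<in> A \<Longrightarrow> f z \<noteq> 0 \<Longrightarrow> kg_basis z \<in> A"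
  shows "A = kg.span (kg_basis ` {g. kg_basis g \<in> A})"
proof
  show "kg.span (kg_basis ` {g. kg_basis g \<in> A}) \<subseteq> A"
    by (rule kg.span_minimal) (use assms(3) in auto)
next
  show "A \<subseteq> kg.span (kg_basis ` {g. kg_basis g \<in> A})"
  proof
    fix f assume f: "f \<in> A"
    have "(\<Sum>g\<in>{g\<in>G. f g \<noteq> 0}. kg_scale (f g) (kg_basis g)) \<in> kg.span (kg_basis ` {g. kg_basis g \<in> A})"
      by (intro kg.span_sum kg.span_scale kg.span_base) (use support f in auto)
    then show "f \<in> kg.span (kg_basis ` {g. kg_basis g \<in> A})"
      using kg_eq_sum_kg_basis[OF assms(1), of f] f assms(2) by auto
  qed
qed

text \<open>Expanding \<open>\<Delta> f = \<Sum> c\<^sub>i a\<^sub>i \<otimes> b\<^sub>i\<close> and reading off the row \<open>z\<close> gives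
  \<open>\<Sum> c\<^sub>i a\<^sub>i(z) b\<^sub>i = f(z) z\<close>, an element of \<open>A\<close>.\<close>
lemma kg_basis_mem_if_Delta_closed:
  assumes "kg.subspace A" and Delta: "kg_Delta f \<in> tensor_sq A"
    and "f \<in> A" "f z \<noteq> 0"
  shows "kg_basis z \<in> A"
proof -
  obtain n :: nat and c a b where ab: "\<forall>i<n. a i \<in> A \<and> b i \<in> A"
    and D: "kg_Delta f = (\<lambda>(x, y). \<Sum>i<n. c i * a i x * b i y)"
    using Delta unfolding tensor_sq_def by blast
  define F where "F = (\<Sum>i<n. kg_scale (c i * a i z) (b i))"
  have "F \<in> A" unfolding F_def
    by (intro kg.subspace_sum[OF assms(1)] kg.subspace_scale[OF assms(1)]) (use ab in auto)
  moreover have "F y = (if z = y then f z else 0)" for y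
    using fun_cong[OF D, of "(z, y)"] by (simp add: F_def sum_fun_apply kg_scale_def kg_Delta_def)
  then have "kg_basis z = kg_scale (inverse (f z)) F"
    using assms(4) by (auto simp: kg_basis_def kg_scale_def fun_eq_iff)
  ultimately show ?thesis using kg.subspace_scale[OF assms(1)] by simp
qed

definition untwist :: "'g set \<Rightarrow> ('g \<Rightarrow> 'g \<Rightarrow> 'g) \<Rightarrow> 'g \<Rightarrow> ('g \<Rightarrow> 'g) \<Rightarrow> 'g monoid" where
  "untwist G mu e alpha = \<lparr>carrier = G, mult = (\<lambda>g h. inv_into G alpha (mu g h)), one = e\<rparr>"

lemma hom_group_hg_inv:
  assumes "hom_group G mu e alpha" "g \<in> G"
  shows "hg_inv G mu e g \<in> G" "mu g (hg_inv G mu e g) = e" "mu (hg_inv G mu e g) g = e"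
proof -
  have "\<exists>h. h \<in> G \<and> mu g h = e \<and> mu h g = e"
    using assms unfolding hom_group_def by blast
  from someI_ex[OF this] show "hg_inv G mu e g \<in> G" "mu g (hg_inv G mu e g) = e"
    "mu (hg_inv G mu e g) g = e"
    unfolding hg_inv_def by blast+
qed

text \<open>Applying \<open>\<alpha>\<close> twice to the two bracketings of \<open>x \<cdot> y \<cdot> z\<close> yields the two sides
  of Hom-associativity, so the untwisted product is associative.\<close>
lemma group_untwist:
  assumes "hom_group G mu e alpha"
  shows "group (untwist G mu e alpha)"
proof -
  note hg = assms[unfolded hom_group_def]
  have closed: "\<And>g h. g \<in> G \<Longrightarrow> h \<in> G \<Longrightarrow> mu g h \<in> G"
    and bij: "bij_betw alpha G G" and "e \<in> G" using hg by blast+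
  define ai where "ai = inv_into G alpha"
  have ai_G: "x \<in> G \<Longrightarrow> ai x \<in> G" and alpha_ai: "x \<in> G \<Longrightarrow> alpha (ai x) = x"
    and ai_alpha: "x \<in> G \<Longrightarrow> ai (alpha x) = x" for x
    using bij unfolding ai_def
    by (auto simp: bij_betw_inv_into_left bij_betw_inv_into_right bij_betw_apply[OF bij_betw_inv_into])
  have "ai e = e" using ai_alpha[OF \<open>e \<in> G\<close>] hg by simp
  show ?thesis
  proof (rule groupI)
    fix x y z assume "x \<in> carrier (untwist G mu e alpha)" "y \<in> carrier (untwist G mu e alpha)"
      "z \<in> carrier (untwist G mu e alpha)"
    then have G: "x \<in> G" "y \<in> G" "z \<in> G" by (simp_all add: untwist_def)
    have "alpha (alpha (ai (mu (ai (mu x y)) z))) = mu (mu x y) (alpha z)"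
      using G hg by (simp add: alpha_ai ai_G closed)
    also have "\<dots> = mu (alpha x) (mu y z)" using G hg by simp
    also have "\<dots> = alpha (alpha (ai (mu x (ai (mu y z)))))"
      using G hg by (simp add: alpha_ai ai_G closed)
    finally have "ai (ai (alpha (alpha (ai (mu (ai (mu x y)) z)))))
        = ai (ai (alpha (alpha (ai (mu x (ai (mu y z)))))))" by simp
    then have "ai (mu (ai (mu x y)) z) = ai (mu x (ai (mu y z)))"
      using G by (simp add: ai_alpha ai_G closed bij_betw_apply[OF bij])
    then show "x \<otimes>\<^bsub>untwist G mu e alpha\<^esub> y \<otimes>\<^bsub>untwist G mu e alpha\<^esub> z
        = x \<otimes>\<^bsub>untwist G mu e alpha\<^esub> (y \<otimes>\<^bsub>untwist G mu e alpha\<^esub> z)"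
      by (simp add: untwist_def ai_def)
  next
    fix x assume "x \<in> carrier (untwist G mu e alpha)"
    then have "x \<in> G" by (simp add: untwist_def)
    then show "\<exists>y\<in>carrier (untwist G mu e alpha). y \<otimes>\<^bsub>untwist G mu e alpha\<^esub> x = \<one>\<^bsub>untwist G mu e alpha\<^esub>"
      using hom_group_hg_inv[OF assms] \<open>ai e = e\<close>
      by (intro bexI[of _ "hg_inv G mu e x"]) (simp_all add: untwist_def ai_def)
  qed (use hg ai_alpha ai_G closed in \<open>auto simp: untwist_def ai_def\<close>)
qed

lemma inv_untwist:
  assumes "hom_group G mu e alpha" "g \<in> G"
  shows "inv\<^bsub>untwist G mu e alpha\<^esub> g = hg_inv G mu e g"
proof (rule group.inv_equality[OF group_untwist[OF assms(1)]])
  have "inv_into G alpha e = e"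
    using assms(1) unfolding hom_group_def by (metis bij_betw_imp_inj_on inv_into_f_f)
  then show "hg_inv G mu e g \<otimes>\<^bsub>untwist G mu e alpha\<^esub> g = \<one>\<^bsub>untwist G mu e alpha\<^esub>"
    using hom_group_hg_inv[OF assms] by (simp add: untwist_def)
qed (use hom_group_hg_inv[OF assms] assms(2) in \<open>simp_all add: untwist_def\<close>)

lemma kg_mult_kg_basis:
  assumes "finite G" "g \<in> G" "h \<in> G"
  shows "kg_mult G mu (kg_basis g) (kg_basis h) = (kg_basis (mu g h) :: 'g \<Rightarrow> 'k::field)"
proof
  fix x
  have "kg_mult G mu (kg_basis g) (kg_basis h) x
      = (\<Sum>p\<in>{p\<in>G \<times> G. mu (fst p) (snd p) = x}. if p = (g, h) then 1 else (0::'k))"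
    unfolding kg_mult_def by (rule sum.cong) (auto simp: kg_basis_def)
  also have "\<dots> = kg_basis (mu g h) x" using assms by (simp add: kg_basis_def)
  finally show "kg_mult G mu (kg_basis g) (kg_basis h) x = (kg_basis (mu g h) x :: 'k)" .
qed

lemma kg_S_kg_basis:
  assumes "finite G" "g \<in> G"
  shows "kg_S G mu e (kg_basis g) = (kg_basis (hg_inv G mu e g) :: 'g \<Rightarrow> 'k::field)"
proof
  fix x
  have "kg_S G mu e (kg_basis g) x = (\<Sum>g'\<in>{g'\<in>G. hg_inv G mu e g' = x}. if g' = g then 1 else (0::'k))"
    unfolding kg_S_def by (rule sum.cong) (auto simp: kg_basis_def)
  also have "\<dots> = kg_basis (hg_inv G mu e g) x" using assms by (simp add: kg_basis_def)
  finally show "kg_S G mu e (kg_basis g) x = (kg_basis (hg_inv G mu e g) x :: 'k)" .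
qed

lemma kg_alpha_apply_alpha:
  assumes "inj_on alpha G" "y \<in> G"
  shows "kg_alpha G alpha f (alpha y) = f y"
proof -
  have "{g \<in> G. alpha g = alpha y} = {y}" using assms by (auto dest: inj_onD)
  then show ?thesis by (simp add: kg_alpha_def)
qed

lemma hom_sub_hopf_kg_basis_mem:
  assumes "hom_sub_hopf G mu e alpha A" "f \<in> A" "f z \<noteq> 0"
  shows "kg_basis z \<in> A"
  using assms(1,2) unfolding hom_sub_hopf_def
  by (intro kg_basis_mem_if_Delta_closed[OF _ _ assms(2,3)]) auto

lemma subgroup_untwist_kg_basis_mem:
  assumes "finite G" and hg: "hom_group G mu e alpha" and "hom_sub_hopf G mu e alpha A"
  shows "subgroup {g. kg_basis g \<in> A} (untwist G mu e alpha)"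
proof -
  note A = assms(3)[unfolded hom_sub_hopf_def]
  have G: "g \<in> G" if "kg_basis g \<in> A" for g
    using that A by (metis kg_basis_mem_KG_iff subsetD)
  show ?thesis
  proof (rule group.subgroupI[OF group_untwist[OF hg]])
    show "{g. kg_basis g \<in> A} \<subseteq> carrier (untwist G mu e alpha)"
      using G by (auto simp: untwist_def)
    show "{g. kg_basis g \<in> A} \<noteq> {}" using A by blast
  next
    fix g assume "g \<in> {g. kg_basis g \<in> A}"
    then have "kg_S G mu e (kg_basis g) \<in> A" using A by simp
    then show "inv\<^bsub>untwist G mu e alpha\<^esub> g \<in> {g. kg_basis g \<in> A}"
      using G \<open>g \<in> _\<close> by (simp add: kg_S_kg_basis inv_untwist \<open>finite G\<close> hg)
  next
    fix g h assume "g \<in> {g. kg_basis g \<in> A}" "h \<in> {g. kg_basis g \<in> A}"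
    then have gh: "g \<in> G" "h \<in> G" "kg_mult G mu (kg_basis g) (kg_basis h) \<in> A"
      using A G by auto
    then have "kg_basis (mu g h) \<in> A" by (simp add: kg_mult_kg_basis \<open>finite G\<close>)
    then obtain f where "f \<in> A" and f: "kg_alpha G alpha f = kg_basis (mu g h)"
      using A by (metis imageE)
    have bij: "bij_betw alpha G G" and "mu g h \<in> G" using hg gh unfolding hom_group_def by blast+
    define y where "y = inv_into G alpha (mu g h)"
    have "y \<in> G" "alpha y = mu g h"
      unfolding y_def using bij \<open>mu g h \<in> G\<close>
      by (auto simp: bij_betw_inv_into_right bij_betw_apply[OF bij_betw_inv_into])
    then have "f y = 1"
      using kg_alpha_apply_alpha[OF bij_betw_imp_inj_on[OF bij], of y f] f by (simp add: kg_basis_def)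
    then show "g \<otimes>\<^bsub>untwist G mu e alpha\<^esub> h \<in> {g. kg_basis g \<in> A}"
      using hom_sub_hopf_kg_basis_mem[OF assms(3) \<open>f \<in> A\<close>, of y] by (simp add: untwist_def y_def)
  qed
qed

theorem mainTheorem12:
  fixes G :: "'g set" and mu :: "'g \<Rightarrow> 'g \<Rightarrow> 'g" and e :: 'g and alpha :: "'g \<Rightarrow> 'g"
    and A :: "('g \<Rightarrow> 'k::field) set"
  assumes "finite G"
    and "hom_group G mu e alpha"
    and "hom_sub_hopf G mu e alpha A"
  shows "kg_dim A dvd card G"
proof -
  define H where "H = {g. kg_basis g \<in> A}"
  have A: "A \<subseteq> KG G" "kg.subspace A"
    using assms(3) unfolding hom_sub_hopf_def by auto
  have sub: "subgroup H (untwist G mu e alpha)"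
    unfolding H_def by (rule subgroup_untwist_kg_basis_mem[OF assms])
  have "card H dvd order (untwist G mu e alpha)"
    using group.lagrange[OF group_untwist[OF assms(2)] sub] by (metis dvd_triv_right)
  moreover have "finite H"
    using subgroup.subset[OF sub] assms(1) by (simp add: untwist_def finite_subset)
  moreover have "A = kg.span (kg_basis ` H)"
    unfolding H_def
    by (rule subspace_eq_span_kg_basis[OF assms(1) A hom_sub_hopf_kg_basis_mem[OF assms(3)]])
  ultimately show ?thesis by (simp add: kg_dim_span_kg_basis order_def untwist_def)
qed

end
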